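(* Let $s$ be an integer with $\gcd(s,n)=1$ and let $\mathcal C\subseteq\mathcal L_{n,q}$ be an $\mathbb F_{q^n}$-linear MRD code of dimension $k$ containing the code $\mathcal G=\langle p(x),p(x)^{[s]},\ldots,p(x)^{[s(k-2)]}\rangle_{\mathbb F_{q^n}}$ (equivalent to $\mathcal G_{k-1,s}$), where $p(x)$ is an invertible linearized polynomial. Suppose there is $g(x)\in\mathcal C\setminus\mathcal G$ with $g(x)\in\langle p(x)^{[-s]},p(x)^{[s(k-1)]}\rangle_{\mathbb F_{q^n}}$ of the form $g(x)=p(x)^{[-s]}+\eta\,p(x)^{[s(k-1)]}$, where $\eta\in\mathbb F_{q^n}$ and $\mathrm N_{q^n/q}(\eta)\neq(-1)^{kn}$. Then $\mathcal C$ is equivalent to $\mathcal H_{k,s}(\eta^{[s]})$.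
   Context: $q$ is a prime power, $[i]:=q^i$ (exponents of $[\,\cdot\,]$ read modulo $n$, so $[-s]=[n-s]$). $\mathcal L_{n,q}$ is the $\mathbb F_{q^n}$-vector space of linearized polynomials $f(x)=\sum_{i=0}^{n-1}a_ix^{[i]}$, $a_i\in\mathbb F_{q^n}$, identified with $\mathbb F_q$-linear maps of $\mathbb F_{q^n}$. For $f(x)=\sum_i a_ix^{[i]}$, $f(x)^{[j]}:=x^{[j]}\circ f(x)=\sum_i a_i^{[j]}x^{[(i+j)\bmod n]}$. A code $\mathcal C\subseteq\mathcal L_{n,q}$ (an $\mathbb F_q$-subspace with rank distance $\mathrm{rk}(f-g)$ and minimum distance $d$) is MRD if $|\mathcal C|=q^{n(n-d+1)}$. $\mathrm N_{q^n/q}(\eta)=\prod_{i=0}^{n-1}\eta^{[i]}$. $\mathcal G_{k,s}=\langle x,\ldots,x^{[s(k-1)]}\rangle_{\mathbb F_{q^n}}$ and $\mathcal H_{k,s}(\eta)=\langle x+\eta x^{[sk]},x^{[s]},\ldots,x^{[s(k-1)]}\rangle_{\mathbb F_{q^n}}$. Codes $\mathcal C,\mathcal C'$ are equivalent if there are invertible $h,g\in\mathcal L_{n,q}$ and a field automorphism $\sigma$ (acting on coefficients) with $\{h\circ f^\sigma\circ g\colon f\in\mathcal C\}=\mathcal C'$. *)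

theory Defs
  imports Complex_Main "HOL-Library.Function_Algebras" "HOL-Computational_Algebra.Primes"
begin

text \<open>Linearized polynomials over F_{q^n} (the finite field type 'a, CARD('a) = q^n) are
  represented by their coefficient vectors a :: nat \<Rightarrow> 'a with a i = 0 for i \<ge> n,
  standing for f(x) = sum_{i<n} a_i x^{q^i}.\<close>

definition prime_power :: "nat \<Rightarrow> bool" where
  "prime_power q \<longleftrightarrow> (\<exists>p m. prime p \<and> m > 0 \<and> q = p ^ m)"

definition lin_space :: "nat \<Rightarrow> (nat \<Rightarrow> 'a::zero) set" where
  "lin_space n = {a. \<forall>i\<ge>n. a i = 0}"

definition lin_eval :: "nat \<Rightarrow> nat \<Rightarrow> (nat \<Rightarrow> 'a::field) \<Rightarrow> 'a \<Rightarrow> 'a" where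
  "lin_eval q n a x = (\<Sum>i<n. a i * x ^ (q ^ i))"

definition cscale :: "'a::field \<Rightarrow> (nat \<Rightarrow> 'a) \<Rightarrow> (nat \<Rightarrow> 'a)" where
  "cscale c a = (\<lambda>i. c * a i)"

definition mono :: "nat \<Rightarrow> int \<Rightarrow> nat \<Rightarrow> 'a::{zero,one}" where
  "mono n j = (\<lambda>i. if i < n \<and> int i = j mod int n then 1 else 0)"

text \<open>f^{[j]} = x^{[j]} \<circ> f: coefficient at m is a_{m-j}^{[j]} (indices mod n).\<close>
definition frob :: "nat \<Rightarrow> nat \<Rightarrow> int \<Rightarrow> (nat \<Rightarrow> 'a::field) \<Rightarrow> (nat \<Rightarrow> 'a)" where
  "frob q n j a = (\<lambda>i. if i < n then (a (nat ((int i - j) mod int n))) ^ (q ^ nat (j mod int n)) else 0)"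

definition frob_el :: "nat \<Rightarrow> nat \<Rightarrow> int \<Rightarrow> 'a::field \<Rightarrow> 'a" where
  "frob_el q n j c = c ^ (q ^ nat (j mod int n))"

definition norm_qn :: "nat \<Rightarrow> nat \<Rightarrow> 'a::field \<Rightarrow> 'a" where
  "norm_qn q n c = (\<Prod>i<n. c ^ (q ^ i))"

text \<open>Rank of f: the F_q-dimension r of its image, i.e. |im f| = q^r.\<close>
definition rk :: "nat \<Rightarrow> nat \<Rightarrow> (nat \<Rightarrow> 'a::{field,finite}) \<Rightarrow> nat" where
  "rk q n a = (THE r. card (range (lin_eval q n a)) = q ^ r)"

definition min_dist :: "nat \<Rightarrow> nat \<Rightarrow> (nat \<Rightarrow> 'a::{field,finite}) set \<Rightarrow> nat" where
  "min_dist q n C = Min {rk q n (f - g) | f g. f \<in> C \<and> g \<in> C \<and> f \<noteq> g}"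

definition is_MRD :: "nat \<Rightarrow> nat \<Rightarrow> (nat \<Rightarrow> 'a::{field,finite}) set \<Rightarrow> bool" where
  "is_MRD q n C \<longleftrightarrow> card C = q ^ (n * (n - min_dist q n C + 1))"

definition field_aut :: "('a::field \<Rightarrow> 'a) \<Rightarrow> bool" where
  "field_aut \<sigma> \<longleftrightarrow> bij \<sigma> \<and> (\<forall>x y. \<sigma> (x + y) = \<sigma> x + \<sigma> y) \<and> (\<forall>x y. \<sigma> (x * y) = \<sigma> x * \<sigma> y)"

definition invertible_lin :: "nat \<Rightarrow> nat \<Rightarrow> (nat \<Rightarrow> 'a::field) \<Rightarrow> bool" where
  "invertible_lin q n a \<longleftrightarrow> a \<in> lin_space n \<and> bij (lin_eval q n a)"

definition code_equiv :: "nat \<Rightarrow> nat \<Rightarrow> (nat \<Rightarrow> 'a::field) set \<Rightarrow> (nat \<Rightarrow> 'a) set \<Rightarrow> bool" where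
  "code_equiv q n C C' \<longleftrightarrow> (\<exists>h g \<sigma>. invertible_lin q n h \<and> invertible_lin q n g \<and> field_aut \<sigma> \<and>
     (\<lambda>f. lin_eval q n h \<circ> lin_eval q n (\<sigma> \<circ> f) \<circ> lin_eval q n g) ` C = lin_eval q n ` C')"

definition H_code :: "nat \<Rightarrow> nat \<Rightarrow> nat \<Rightarrow> int \<Rightarrow> 'a::field \<Rightarrow> (nat \<Rightarrow> 'a) set" where
  "H_code q n k s \<eta> = module.span cscale
     (insert (mono n 0 + cscale \<eta> (mono n (s * int k))) {mono n (s * int i) | i. 1 \<le> i \<and> i \<le> k - 1})"

end

theory Submission
  imports Defs "HOL-Number_Theory.Residues" "HOL-Computational_Algebra.Polynomial"
begin

(* Since G has dimension k - 1 (the p^[si], i < k - 1, are linearly independent because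
   gcd(s, n) = 1) and g is not in G, the k-dimensional code C is spanned by these p^[si]
   together with g. With b the compositional inverse of p, the map f |-> x^[s] o f o b sends
   p^[si] to x^[s(i+1)] and g to x + eta^[s] x^[sk], i.e. this basis of C onto the defining
   basis of H_{k,s}(eta^[s]). The map is semilinear with respect to c |-> c^[s], hence it
   maps C onto H_{k,s}(eta^[s]). *)

lemma sum_fun_apply: "(\<Sum>a\<in>A. f a) x = (\<Sum>a\<in>A. f a x)"
  by (induction A rule: infinite_finite_induct) auto

lemma image_lessThan_Suc_if:
  "(\<lambda>i. if i < m then f i else x) ` {..<Suc m} = insert x (f ` {..<m})"
  by (auto simp: lessThan_Suc)

lemma nat_mod_add_sub_cancel:
  fixes j :: int
  assumes "n > 0" "m < n" "int j' = j mod int n"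
  shows "nat ((int ((m + j') mod n) - j) mod int n) = m"
proof -
  have "(int ((m + j') mod n) - j) mod int n = (int m + (j mod int n - j)) mod int n"
    using assms by (simp add: zmod_int mod_diff_left_eq algebra_simps)
  also have "j mod int n - j = int n * (- (j div int n))"
    by (simp add: minus_div_mult_eq_mod[symmetric])
  also have "(int m + int n * (- (j div int n))) mod int n = int m"
    using assms by (simp only: mod_mult_self2) simp
  finally show ?thesis
    by simp
qed

lemma nat_mod_sub_add_cancel:
  fixes j :: int
  assumes "n > 0" "i < n" "int j' = j mod int n"
  shows "(nat ((int i - j) mod int n) + j') mod n = i"
proof -
  have "int ((nat ((int i - j) mod int n) + j') mod n) = ((int i - j) mod int n + j mod int n) mod int n"
    using assms by (simp add: zmod_int)
  also have "\<dots> = int i"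
    using assms by (simp add: mod_add_eq)
  finally show ?thesis
    by simp
qed

lemma mult_coprime_mod_inj:
  fixes s :: int
  assumes "coprime s (int n)" "i < n" "j < n" "(s * int i) mod int n = (s * int j) mod int n"
  shows "i = j"
proof -
  have "int n dvd s * (int i - int j)"
    using assms(4) by (simp add: mod_eq_dvd_iff right_diff_distrib)
  then have "int n dvd int i - int j"
    using assms(1) by (simp add: coprime_dvd_mult_right_iff coprime_commute)
  then show ?thesis
    using assms(2,3) dvd_imp_le_int[of "int i - int j" "int n"] by fastforce
qed

(* The library's finite_field_power_card_eq_same needs the sort finite_field. *)

lemma field_power_card_eq_self:
  fixes x :: "'a::{field,finite}"
  shows "x ^ card (UNIV :: 'a set) = x"
proof (cases "x = 0")
  case False
  let ?U = "UNIV - {0 :: 'a}"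
  have "(\<Prod>y\<in>?U. x * y) = \<Prod>?U"
    using False by (intro prod.reindex_bij_witness[of _ "\<lambda>y. y / x" "\<lambda>y. x * y"]) auto
  then have "x ^ card ?U * \<Prod>?U = 1 * \<Prod>?U"
    by (simp add: prod.distrib)
  moreover have "\<Prod>?U \<noteq> 0"
    by simp
  ultimately have "x ^ card ?U = 1"
    by (metis mult_right_cancel)
  moreover have "card (UNIV :: 'a set) = Suc (card ?U)"
    using card_Diff_singleton[of "0 :: 'a" UNIV] finite_UNIV_card_ge_0[where 'a='a] by simp
  ultimately show ?thesis
    by (metis power_Suc mult_1_right)
qed (simp add: finite_UNIV_card_ge_0)

lemma prime_CHAR_finite_field: "prime CHAR('a::{field,finite})"
  using prime_CHAR_semidom finite_imp_CHAR_pos[where 'a='a] by auto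

context vector_space
begin

lemma span_finite_family:
  assumes "finite I"
  shows "span (u ` I) = range (\<lambda>c. \<Sum>i\<in>I. c i *s u i)"
proof
  let ?R = "range (\<lambda>c. \<Sum>i\<in>I. c i *s u i)"
  show "?R \<subseteq> span (u ` I)"
    by (auto intro!: span_sum span_scale intro: span_base)
  have subspace_R: "subspace ?R"
  proof (rule subspaceI)
    show "0 \<in> ?R"
      by (rule range_eqI[where x="\<lambda>_. 0"]) simp
    have "(\<Sum>i\<in>I. c i *s u i) + (\<Sum>i\<in>I. d i *s u i) = (\<Sum>i\<in>I. (c i + d i) *s u i)" for c d
      by (simp add: sum.distrib scale_left_distrib)
    then show "x + y \<in> ?R" if "x \<in> ?R" "y \<in> ?R" for x y
      using that by (auto intro!: rangeI)
    have "a *s (\<Sum>i\<in>I. c i *s u i) = (\<Sum>i\<in>I. (a * c i) *s u i)" for a c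
      by (simp add: scale_sum_right)
    then show "a *s x \<in> ?R" if "x \<in> ?R" for a x
      using that by (auto intro!: rangeI)
  qed
  have generators: "u j \<in> ?R" if "j \<in> I" for j
  proof (rule range_eqI[where x="\<lambda>i. if i = j then 1 else 0"])
    have "(\<Sum>i\<in>I. (if i = j then 1 else 0) *s u i) = (\<Sum>i\<in>I. if i = j then u i else 0)"
      by (intro sum.cong) auto
    then show "u j = (\<Sum>i\<in>I. (if i = j then 1 else 0) *s u i)"
      using that assms by simp
  qed
  show "span (u ` I) \<subseteq> ?R"
    by (rule span_minimal[OF _ subspace_R]) (use generators in blast)
qed

lemma image_span_semilinear:
  assumes "finite I" "surj \<sigma>"
    and "\<And>c. T (\<Sum>i\<in>I. c i *s u i) = F (\<Sum>i\<in>I. \<sigma> (c i) *s w i)"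
  shows "T ` span (u ` I) = F ` span (w ` I)"
proof -
  have "T ` span (u ` I) = range (\<lambda>c. F (\<Sum>i\<in>I. \<sigma> (c i) *s w i))"
    by (simp add: span_finite_family assms(1,3) image_image)
  also have "\<dots> = (\<lambda>d. F (\<Sum>i\<in>I. d i *s w i)) ` range (\<lambda>c. \<sigma> \<circ> c)"
    by (simp add: image_image)
  also have "range (\<lambda>c. \<sigma> \<circ> c) = UNIV"
  proof -
    have "d = \<sigma> \<circ> (inv_into UNIV \<sigma> \<circ> d)" for d
      using assms(2) by (simp add: fun_eq_iff surj_f_inv_f)
    then show ?thesis
      by blast
  qed
  finally show ?thesis
    by (simp add: span_finite_family assms(1) image_image)
qed

lemma family_independent_imp_inj_independent:
  assumes "finite I" and indep: "\<And>c. (\<Sum>i\<in>I. c i *s u i) = 0 \<Longrightarrow> \<forall>i\<in>I. c i = 0"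
  shows "inj_on u I" "independent (u ` I)"
proof -
  show inj: "inj_on u I"
  proof (rule inj_onI, rule ccontr)
    fix i j
    assume ij: "i \<in> I" "j \<in> I" "u i = u j" "i \<noteq> j"
    define c :: "_ \<Rightarrow> 'a" where "c l = (if l = i then 1 else 0) - (if l = j then 1 else 0)" for l
    have "(\<Sum>l\<in>I. c l *s u l) = (\<Sum>l\<in>I. if l = i then u l else 0) - (\<Sum>l\<in>I. if l = j then u l else 0)"
      unfolding c_def scale_left_diff_distrib sum_subtractf by (intro arg_cong2[where f=minus] sum.cong) auto
    also have "\<dots> = 0"
      using ij assms(1) by simp
    finally have "c i = 0"
      using indep ij(1) by blast
    then show False
      using ij(4) by (simp add: c_def)
  qed
  show "independent (u ` I)"
  proof (rule independent_if_scalars_zero)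
    show "finite (u ` I)"
      using assms(1) by simp
    fix f x
    assume "(\<Sum>y\<in>u ` I. f y *s y) = 0" "x \<in> u ` I"
    then show "f x = 0"
      using indep[of "f \<circ> u"] by (auto simp: sum.reindex[OF inj])
  qed
qed

lemma independent_card_le_dim_of_finite_span:
  assumes "finite W" "V \<subseteq> span W" "T \<subseteq> V" "independent T"
  shows "card T \<le> dim V"
proof -
  obtain B where B: "B \<subseteq> V" "independent B" "V \<subseteq> span B" "card B = dim V"
    by (rule basis_exists)
  have "finite B"
    using independent_span_bound[OF assms(1) B(2)] B(1) assms(2) by blast
  then show ?thesis
    using independent_span_bound[OF _ assms(4)] B assms(3) by (metis subset_trans)
qed

lemma card_ge_dim_independent_of_finite_span:
  assumes "finite W" "V \<subseteq> span W" "B \<subseteq> V" "independent B" "dim V \<le> card B"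
  shows "V \<subseteq> span B"
proof
  fix x
  assume x: "x \<in> V"
  show "x \<in> span B"
  proof (rule ccontr)
    assume "x \<notin> span B"
    then have "independent (insert x B)" "x \<notin> B"
      using assms(4) by (auto simp: independent_insert span_base)
    then have "card (insert x B) \<le> dim V"
      using independent_card_le_dim_of_finite_span[OF assms(1,2)] x assms(3) by blast
    moreover have "finite B"
      using independent_span_bound[OF assms(1,4)] assms(2,3) by blast
    ultimately show False
      using assms(5) \<open>x \<notin> B\<close> by simp
  qed
qed

end

lemma vector_space_cscale: "vector_space (cscale :: 'a::field \<Rightarrow> (nat \<Rightarrow> 'a) \<Rightarrow> _)"
  by unfold_locales (auto simp: cscale_def fun_eq_iff algebra_simps)

interpretation vs: vector_space "cscale :: 'a::field \<Rightarrow> (nat \<Rightarrow> 'a) \<Rightarrow> _"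
  by (rule vector_space_cscale)

lemma lin_eval_add: "lin_eval q n (a + b) x = lin_eval q n a x + lin_eval q n b x"
  by (simp add: lin_eval_def sum.distrib distrib_right)

lemma lin_eval_diff: "lin_eval q n (a - b) x = lin_eval q n a x - lin_eval q n b x"
  by (simp add: lin_eval_def sum_subtractf left_diff_distrib)

lemma lin_eval_cscale: "lin_eval q n (cscale c a) x = c * lin_eval q n a x"
  by (simp add: lin_eval_def cscale_def sum_distrib_left mult.assoc)

lemma lin_eval_sum: "lin_eval q n (\<Sum>i\<in>I. f i) x = (\<Sum>i\<in>I. lin_eval q n (f i) x)"
  by (simp add: lin_eval_def sum_fun_apply sum_distrib_right sum.swap[of _ I])

lemma finite_lin_space: "finite (lin_space n :: (nat \<Rightarrow> 'a::{zero,finite}) set)"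
proof (rule finite_subset)
  show "lin_space n \<subseteq> {f :: nat \<Rightarrow> 'a. \<forall>i. (i \<in> {..<n} \<longrightarrow> f i \<in> UNIV) \<and> (i \<notin> {..<n} \<longrightarrow> f i = 0)}"
    by (auto simp: lin_space_def)
qed (rule finite_set_of_finite_funs; simp)

lemma mono_apply:
  assumes "n > 0"
  shows "Defs.mono n a (nat (b mod int n)) = (if a mod int n = b mod int n then 1 else 0)"
  using assms by (simp add: Defs.mono_def nat_less_iff)

lemma lin_space_subset_span_monos:
  "lin_space n \<subseteq> vs.span ((\<lambda>i. Defs.mono n (int i) :: nat \<Rightarrow> 'a::field) ` {..<n})"
proof
  fix a :: "nat \<Rightarrow> 'a"
  assume a: "a \<in> lin_space n"
  have "a = (\<Sum>i<n. cscale (a i) (Defs.mono n (int i)))"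
  proof
    fix j
    have "(\<Sum>i<n. cscale (a i) (Defs.mono n (int i))) j = (\<Sum>i<n. if i = j then a i else 0)"
      unfolding sum_fun_apply by (intro sum.cong) (auto simp: cscale_def Defs.mono_def)
    then show "a j = (\<Sum>i<n. cscale (a i) (Defs.mono n (int i))) j"
      using a by (cases "j < n") (auto simp: lin_space_def)
  qed
  also have "\<dots> \<in> vs.span ((\<lambda>i. Defs.mono n (int i)) ` {..<n})"
    by (intro vs.span_sum vs.span_scale vs.span_base) auto
  finally show "a \<in> vs.span ((\<lambda>i. Defs.mono n (int i)) ` {..<n})" .
qed

lemma dim_le_if_subset_lin_space:
  assumes "C \<subseteq> lin_space n"
  shows "vs.dim (C :: (nat \<Rightarrow> 'a::field) set) \<le> n"
proof -
  have "vs.dim C \<le> card ((\<lambda>i. Defs.mono n (int i) :: nat \<Rightarrow> 'a) ` {..<n})"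
    using assms lin_space_subset_span_monos by (intro vs.dim_le_card) auto
  also have "\<dots> \<le> n"
    using card_image_le[of "{..<n}"] by simp
  finally show ?thesis .
qed

lemma H_code_eq_span_family:
  assumes "k \<ge> 1"
  shows "H_code q n k s \<eta> = vs.span ((\<lambda>i. if i < k - 1 then Defs.mono n (s * int (i + 1))
    else Defs.mono n 0 + cscale \<eta> (Defs.mono n (s * int k))) ` {..<k})"
proof -
  obtain m where k: "k = Suc m"
    using assms by (cases k) auto
  have generators:
    "{Defs.mono n (s * int i) | i. 1 \<le> i \<and> i \<le> m} = (\<lambda>i. Defs.mono n (s * int (i + 1))) ` {..<m}"
  proof (intro equalityI subsetI)
    fix x
    assume "x \<in> {Defs.mono n (s * int i) | i. 1 \<le> i \<and> i \<le> m}"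
    then obtain i where "x = Defs.mono n (s * int i)" "1 \<le> i" "i \<le> m"
      by blast
    then show "x \<in> (\<lambda>i. Defs.mono n (s * int (i + 1))) ` {..<m}"
      by (intro image_eqI[where x="i - 1"]) auto
  qed force
  show ?thesis
    unfolding H_code_def k diff_Suc_1 image_lessThan_Suc_if generators ..
qed

definition lin_comp :: "nat \<Rightarrow> nat \<Rightarrow> (nat \<Rightarrow> 'a::field) \<Rightarrow> (nat \<Rightarrow> 'a) \<Rightarrow> nat \<Rightarrow> 'a" where
  "lin_comp q n p a = (\<Sum>i<n. cscale (p i) (frob q n (int i) a))"

lemma lin_comp_in_lin_space: "lin_comp q n p a \<in> lin_space n"
  by (simp add: lin_comp_def lin_space_def cscale_def frob_def sum_fun_apply)

locale Fqn =
  fixes q n :: nat and field_type :: "'a::{field,finite} itself"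
  assumes prime_power_q: "prime_power q" and n_pos: "n \<ge> 1"
    and card_field: "card (UNIV :: 'a set) = q ^ n"
begin

abbreviation Fr :: "int \<Rightarrow> 'a \<Rightarrow> 'a" where "Fr \<equiv> frob_el q n"

abbreviation ev :: "(nat \<Rightarrow> 'a) \<Rightarrow> 'a \<Rightarrow> 'a" where "ev \<equiv> lin_eval q n"

lemma q_eq_CHAR_power: "\<exists>m. q = CHAR('a) ^ m"
proof -
  obtain P m where P: "prime P" "m > 0" "q = P ^ m"
    using prime_power_q unfolding prime_power_def by blast
  have "CHAR('a) dvd P ^ (m * n)"
    using CHAR_dvd_CARD[where 'a='a] card_field P(3) by (simp add: power_mult)
  then have "CHAR('a) = P"
    using P(1) prime_CHAR_finite_field prime_dvd_power primes_dvd_imp_eq by blast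
  then show ?thesis
    using P(3) by blast
qed

lemma q_gt_1: "q > 1"
  using prime_power_q unfolding prime_power_def
  by (metis one_less_power prime_gt_1_nat)

lemma power_q_power_add: "(x + y :: 'a) ^ q ^ i = x ^ q ^ i + y ^ q ^ i"
proof -
  obtain m where "q = CHAR('a) ^ m"
    using q_eq_CHAR_power by blast
  then show ?thesis
    by (intro freshmans_dream'[OF prime_CHAR_finite_field, where n="m * i"]) (simp add: power_mult)
qed

lemma power_q_power_sum: "(sum f A :: 'a) ^ q ^ i = (\<Sum>j\<in>A. f j ^ q ^ i)"
proof -
  obtain m where "q = CHAR('a) ^ m"
    using q_eq_CHAR_power by blast
  then show ?thesis
    by (intro freshmans_dream_sum'[OF prime_CHAR_finite_field, where n="m * i"]) (simp add: power_mult)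
qed

lemma power_q_power_mod: "(x :: 'a) ^ q ^ j = x ^ q ^ (j mod n)"
proof -
  have "x ^ q ^ (n * d) = x" for d
  proof (induction d)
    case (Suc d)
    have "q ^ (n * Suc d) = q ^ (n * d) * card (UNIV :: 'a set)"
      by (simp add: card_field power_add)
    then have "x ^ q ^ (n * Suc d) = (x ^ q ^ (n * d)) ^ card (UNIV :: 'a set)"
      by (simp only: power_mult)
    then show ?case
      using Suc field_power_card_eq_self by simp
  qed simp
  then show ?thesis
    by (metis div_mult_mod_eq mult.commute power_add power_mult)
qed

lemma frob_el_of_nat: "Fr (int i) x = x ^ q ^ i"
  unfolding frob_el_def by (simp flip: zmod_int power_q_power_mod)

lemma frob_el_frob_el: "Fr j (Fr l x) = Fr (j + l) x"
proof -
  have "int ((nat (l mod int n) + nat (j mod int n)) mod n) = (l mod int n + j mod int n) mod int n"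
    using n_pos by (simp add: zmod_int)
  also have "\<dots> = (j + l) mod int n"
    by (simp add: mod_add_eq add.commute)
  finally have "(nat (l mod int n) + nat (j mod int n)) mod n = nat ((j + l) mod int n)"
    by simp
  then show ?thesis
    unfolding frob_el_def by (metis power_add power_mult power_q_power_mod)
qed

lemma frob_el_0: "Fr 0 x = x"
  by (simp add: frob_el_def)

lemma frob_el_inverse: "Fr j (Fr (- j) x) = x"
  by (simp add: frob_el_frob_el frob_el_0)

lemma bij_frob_el: "bij (Fr j)"
  by (rule o_bij[where g="Fr (- j)"]) (use frob_el_inverse frob_el_inverse[of "- j"] in \<open>auto simp: fun_eq_iff\<close>)

lemma frob_el_add: "Fr j (x + y) = Fr j x + Fr j y"
  unfolding frob_el_def by (rule power_q_power_add)

lemma frob_el_mult: "Fr j (x * y) = Fr j x * Fr j y"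
  unfolding frob_el_def by (simp add: power_mult_distrib)

lemma frob_el_sum: "Fr j (sum f A) = (\<Sum>i\<in>A. Fr j (f i))"
  unfolding frob_el_def by (rule power_q_power_sum)

lemma lin_eval_mono: "ev (Defs.mono n e) x = Fr e x"
proof -
  define e' where "e' = nat (e mod int n)"
  have e': "e' < n" "int e' = e mod int n"
    using n_pos by (auto simp: e'_def nat_less_iff)
  have "ev (Defs.mono n e) x = (\<Sum>i<n. if i = e' then x ^ q ^ i else 0)"
    unfolding lin_eval_def Defs.mono_def using e' by (intro sum.cong) auto
  then show ?thesis
    using e'(1) by (simp add: frob_el_def e'_def)
qed

lemma lin_eval_frob:
  assumes "a \<in> lin_space n"
  shows "ev (frob q n j a) x = Fr j (ev a x)"
proof -
  define j' where "j' = nat (j mod int n)"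
  have j': "int j' = j mod int n"
    using n_pos by (simp add: j'_def)
  have "Fr j (ev a x) = (\<Sum>m<n. a m ^ q ^ j' * x ^ q ^ ((m + j') mod n))"
    unfolding lin_eval_def frob_el_def j'_def[symmetric]
    by (simp add: power_q_power_sum power_mult_distrib flip: power_mult power_add power_q_power_mod)
  also have "\<dots> = (\<Sum>i<n. a (nat ((int i - j) mod int n)) ^ q ^ j' * x ^ q ^ i)"
    using n_pos j' nat_mod_add_sub_cancel[of n _ j' j] nat_mod_sub_add_cancel[of n _ j' j]
    by (intro sum.reindex_bij_witness[where i="\<lambda>i. nat ((int i - j) mod int n)" and j="\<lambda>m. (m + j') mod n"])
      (auto simp: nat_less_iff)
  also have "\<dots> = ev (frob q n j a) x"
    unfolding lin_eval_def frob_def j'_def by simp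
  finally show ?thesis ..
qed

lemma lin_eval_eq_0_imp_eq_0:
  assumes "a \<in> lin_space n" and "\<And>x. ev a x = 0"
  shows "a = 0"
proof -
  define P where "P = (\<Sum>i<n. monom (a i) (q ^ i))"
  have poly_P: "poly P x = ev a x" for x
    unfolding P_def lin_eval_def by (simp add: poly_sum poly_monom)
  have "P = 0"
  proof (rule ccontr)
    assume "P \<noteq> 0"
    then have "card {x. poly P x = 0} \<le> degree P"
      by (rule card_poly_roots_bound)
    also have "degree P \<le> q ^ (n - 1)"
      unfolding P_def using q_gt_1
      by (intro degree_sum_le) (auto intro!: order.trans[OF degree_monom_le] power_increasing)
    also have "\<dots> < q ^ n"
      using q_gt_1 n_pos by (intro power_strict_increasing) auto
    finally show False
      using poly_P assms(2) card_field by simp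
  qed
  show ?thesis
  proof
    fix j
    show "a j = 0 j"
    proof (cases "j < n")
      case True
      have "coeff P (q ^ j) = (\<Sum>i<n. if i = j then a i else 0)"
        unfolding P_def coeff_sum using q_gt_1 by (intro sum.cong) (auto simp: power_inject_exp)
      then show ?thesis
        using True \<open>P = 0\<close> by simp
    qed (use assms(1) in \<open>simp add: lin_space_def\<close>)
  qed
qed

lemma lin_eval_inj:
  assumes "a \<in> lin_space n" "b \<in> lin_space n" "\<And>x. ev a x = ev b x"
  shows "a = b"
proof -
  have "a - b \<in> lin_space n"
    using assms(1,2) by (simp add: lin_space_def)
  then show ?thesis
    using lin_eval_eq_0_imp_eq_0[of "a - b"] assms(3) by (simp add: lin_eval_diff)
qed

lemma lin_eval_lin_comp:
  assumes "a \<in> lin_space n"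
  shows "ev (lin_comp q n p a) x = ev p (ev a x)"
  using assms by (simp add: lin_comp_def lin_eval_sum lin_eval_cscale lin_eval_frob frob_el_of_nat
      lin_eval_def[of q n p])

lemma invertible_lin_right_inverse:
  fixes p :: "nat \<Rightarrow> 'a"
  assumes "invertible_lin q n p"
  obtains b where "invertible_lin q n b" "\<And>x. ev p (ev b x) = x"
proof -
  have "inj_on (lin_comp q n p) (lin_space n)"
  proof (rule inj_onI)
    fix a a'
    assume a: "a \<in> lin_space n" "a' \<in> lin_space n" and eq: "lin_comp q n p a = lin_comp q n p a'"
    have "ev p (ev a x) = ev p (ev a' x)" for x
      using lin_eval_lin_comp[OF a(1), of p x] lin_eval_lin_comp[OF a(2), of p x] eq by simp
    then have "ev a x = ev a' x" for x
      using assms by (simp add: invertible_lin_def bij_def inj_eq)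
    then show "a = a'"
      using a lin_eval_inj by blast
  qed
  then have "lin_comp q n p ` lin_space n = lin_space n"
    using finite_lin_space lin_comp_in_lin_space by (intro endo_inj_surj) auto
  moreover have "Defs.mono n 0 \<in> lin_space n"
    by (simp add: lin_space_def Defs.mono_def)
  ultimately obtain b where b: "b \<in> lin_space n" "lin_comp q n p b = Defs.mono n 0"
    by (metis imageE)
  have right_inverse: "ev p (ev b x) = x" for x
    using lin_eval_lin_comp[OF b(1), of p x] b(2) by (simp add: lin_eval_mono frob_el_0)
  then have "inj (ev b)"
    by (metis injI)
  then have "bij (ev b)"
    by (simp add: bij_def finite_UNIV_inj_surj)
  then show thesis
    using that b(1) right_inverse unfolding invertible_lin_def by blast
qed

lemma frob_family_independent:
  fixes p :: "nat \<Rightarrow> 'a"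
  assumes "invertible_lin q n p" "coprime s (int n)" "K \<le> n"
    and "(\<Sum>i<K. cscale (c i) (frob q n (s * int i) p)) = 0"
  shows "\<forall>i<K. c i = 0"
proof -
  have p: "p \<in> lin_space n" "bij (ev p)"
    using assms(1) unfolding invertible_lin_def by auto
  (* Precomposing with the bijection p turns the relation into one between the monomials
     x^[si], i < K, which have distinct exponents mod n since gcd(s, n) = 1. *)
  define m where "m = (\<Sum>i<K. cscale (c i) (Defs.mono n (s * int i)))"
  have "ev m (ev p x) = ev (\<Sum>i<K. cscale (c i) (frob q n (s * int i) p)) x" for x
    unfolding m_def using p(1) by (simp add: lin_eval_sum lin_eval_cscale lin_eval_frob lin_eval_mono)
  also have "\<dots> x = 0" for x
    using assms(4) by (simp add: lin_eval_def)
  finally have "ev m y = 0" for y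
    using p(2) by (metis bij_pointE)
  then have "m = 0"
    by (intro lin_eval_eq_0_imp_eq_0) (simp add: m_def lin_space_def cscale_def Defs.mono_def sum_fun_apply)
  show ?thesis
  proof (intro allI impI)
    fix j
    assume "j < K"
    have "(s * int i) mod int n = (s * int j) mod int n \<longleftrightarrow> i = j" if "i < K" for i
      using mult_coprime_mod_inj[OF assms(2)] that \<open>j < K\<close> assms(3) by auto
    then have "m (nat ((s * int j) mod int n)) = (\<Sum>i<K. if i = j then c i else 0)"
      unfolding m_def sum_fun_apply using n_pos by (intro sum.cong) (auto simp: cscale_def mono_apply)
    then show "c j = 0"
      using \<open>m = 0\<close> \<open>j < K\<close> by simp
  qed
qed

lemma code_eq_span_extension:
  fixes C :: "(nat \<Rightarrow> 'a) set" and p g :: "nat \<Rightarrow> 'a" and s :: int and k :: nat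
  defines "v \<equiv> \<lambda>i. frob q n (s * int i) p"
  assumes C: "C \<subseteq> lin_space n" "vs.subspace C" "vs.dim C = k"
    and p: "invertible_lin q n p" and s: "coprime s (int n)"
    and G: "vs.span (v ` {..<k - 1}) \<subseteq> C" and g: "g \<in> C" "g \<notin> vs.span (v ` {..<k - 1})"
  shows "k \<ge> 1" "C = vs.span ((\<lambda>i. if i < k - 1 then v i else g) ` {..<k})"
proof -
  let ?B = "insert g (v ` {..<k - 1})"
  let ?W = "(\<lambda>i. Defs.mono n (int i) :: nat \<Rightarrow> 'a) ` {..<n}"
  have "k \<le> n"
    using dim_le_if_subset_lin_space[OF C(1)] C(3) by simp
  have family: "\<forall>i\<in>{..<k - 1}. c i = 0" if "(\<Sum>i<k - 1. cscale (c i) (v i)) = 0" for c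
  proof -
    have "k - 1 \<le> n"
      using \<open>k \<le> n\<close> by simp
    then show ?thesis
      using frob_family_independent[OF p s] that by (simp add: v_def)
  qed
  have "inj_on v {..<k - 1}"
    by (rule vs.family_independent_imp_inj_independent(1)[OF finite_lessThan family])
  moreover have "vs.independent (v ` {..<k - 1})"
    by (rule vs.family_independent_imp_inj_independent(2)[OF finite_lessThan family])
  moreover have "g \<notin> v ` {..<k - 1}"
    using g(2) by (rule contrapos_nn) (rule vs.span_base)
  ultimately have indep: "vs.independent ?B" and card_B: "card ?B = k - 1 + 1"
    using g(2) by (simp_all add: vs.independent_insertI card_image)
  have B_sub: "?B \<subseteq> C"
    using subset_trans[OF vs.span_superset G] g(1) by simp
  have W: "finite ?W" "C \<subseteq> vs.span ?W"
    using C(1) lin_space_subset_span_monos by auto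
  have "card ?B \<le> k"
    using vs.independent_card_le_dim_of_finite_span[OF W B_sub indep] C(3) by simp
  then show "k \<ge> 1"
    using card_B by simp
  then have "C \<subseteq> vs.span ?B"
    using vs.card_ge_dim_independent_of_finite_span[OF W B_sub indep] card_B C(3) by simp
  then have "C = vs.span ?B"
    using vs.span_minimal[OF B_sub C(2)] by (rule equalityI)
  moreover have "?B = (\<lambda>i. if i < k - 1 then v i else g) ` {..<k}"
    using image_lessThan_Suc_if[of "k - 1" v g] \<open>k \<ge> 1\<close> by simp
  ultimately show "C = vs.span ((\<lambda>i. if i < k - 1 then v i else g) ` {..<k})"
    by simp
qed

lemma frob_el_lin_eval_frob_inverse:
  assumes "p \<in> lin_space n" "\<And>x. ev p (ev b x) = x"
  shows "Fr s (ev (frob q n j p) (ev b x)) = Fr (s + j) x"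
  using assms by (simp add: lin_eval_frob frob_el_frob_el)

lemma code_equiv_span_family:
  fixes u w :: "nat \<Rightarrow> nat \<Rightarrow> 'a"
  assumes "finite I" "invertible_lin q n b"
    and "\<And>i x. i \<in> I \<Longrightarrow> Fr s (ev (u i) (ev b x)) = ev (w i) x"
  shows "code_equiv q n (vs.span (u ` I)) (vs.span (w ` I))"
proof -
  define h where "h = (Defs.mono n s :: nat \<Rightarrow> 'a)"
  have ev_h: "ev h = Fr s"
    by (simp add: h_def fun_eq_iff lin_eval_mono)
  have h: "invertible_lin q n h"
    unfolding invertible_lin_def ev_h using bij_frob_el by (simp add: h_def lin_space_def Defs.mono_def)
  have "field_aut (id :: 'a \<Rightarrow> 'a)"
    by (simp add: field_aut_def)
  moreover have "ev h \<circ> ev (\<Sum>i\<in>I. cscale (c i) (u i)) \<circ> ev b = ev (\<Sum>i\<in>I. cscale (Fr s (c i)) (w i))" for c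
  proof
    fix x
    show "(ev h \<circ> ev (\<Sum>i\<in>I. cscale (c i) (u i)) \<circ> ev b) x = ev (\<Sum>i\<in>I. cscale (Fr s (c i)) (w i)) x"
      using assms(3) by (simp add: ev_h lin_eval_sum lin_eval_cscale frob_el_sum frob_el_mult)
  qed
  then have "(\<lambda>f. ev h \<circ> ev f \<circ> ev b) ` vs.span (u ` I) = ev ` vs.span (w ` I)"
    by (rule vs.image_span_semilinear[OF assms(1) bij_is_surj[OF bij_frob_el]])
  ultimately show ?thesis
    unfolding code_equiv_def id_comp using h assms(2) by (intro exI[of _ h] exI[of _ b] exI[of _ id]) simp
qed

end

theorem lemma3p8:
  fixes q n k :: nat and s :: int and C :: "(nat \<Rightarrow> 'a::{field,finite}) set"
    and p g :: "nat \<Rightarrow> 'a" and \<eta> :: 'a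
  assumes q: "prime_power q" and n: "n \<ge> 1" and card: "card (UNIV :: 'a set) = q ^ n"
    and s: "gcd s (int n) = 1"
    and C_sub: "C \<subseteq> lin_space n"
    and C_lin: "module.subspace cscale C"
    and C_dim: "vector_space.dim cscale C = k"
    and C_MRD: "is_MRD q n C"
    and p: "invertible_lin q n p"
    and G_sub: "module.span cscale {frob q n (s * int i) p | i. i + 2 \<le> k} \<subseteq> C"
    and gC: "g \<in> C"
    and gG: "g \<notin> module.span cscale {frob q n (s * int i) p | i. i + 2 \<le> k}"
    and g_form: "g = frob q n (- s) p + cscale \<eta> (frob q n (s * (int k - 1)) p)"
    and norm: "norm_qn q n \<eta> \<noteq> (-1) ^ (k * n)"
  shows "code_equiv q n C (H_code q n k s (frob_el q n s \<eta>))"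
proof -
  interpret Fqn q n "TYPE('a)"
    using q n card by unfold_locales
  define u where "u i = (if i < k - 1 then frob q n (s * int i) p else g)" for i
  define w where "w = (\<lambda>i. if i < k - 1 then Defs.mono n (s * int (i + 1))
    else Defs.mono n 0 + cscale (Fr s \<eta>) (Defs.mono n (s * int k)) :: nat \<Rightarrow> 'a)"
  have "{frob q n (s * int i) p | i. i + 2 \<le> k} = (\<lambda>i. frob q n (s * int i) p) ` {..<k - 1}"
    by force
  then have k: "k \<ge> 1" and C: "C = vs.span (u ` {..<k})"
    using code_eq_span_extension[OF C_sub C_lin C_dim p] s G_sub gC gG
    by (auto simp: u_def coprime_iff_gcd_eq_1)
  obtain b where b: "invertible_lin q n b" "\<And>x. ev p (ev b x) = x"
    using invertible_lin_right_inverse[OF p] by metis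
  have "p \<in> lin_space n"
    using p by (simp add: invertible_lin_def)
  note conjugate = frob_el_lin_eval_frob_inverse[OF this b(2), where s=s]
  have "Fr s (ev (u i) (ev b x)) = ev (w i) x" for i x
    using conjugate[where j="s * int i"] conjugate[where j="- s"] conjugate[where j="s * (int k - 1)"]
    by (simp add: u_def w_def g_form lin_eval_add lin_eval_cscale lin_eval_mono
        frob_el_add frob_el_mult frob_el_0 algebra_simps)
  then have "code_equiv q n (vs.span (u ` {..<k})) (vs.span (w ` {..<k}))"
    by (rule code_equiv_span_family[OF finite_lessThan b(1)])
  then show ?thesis
    unfolding C H_code_eq_span_family[OF k] w_def .
qed

end
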